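(* Let $1\le p\le\infty$ and let $A=\{[x_i^a,y_i^a]\}_{i=1}^{n_a}$ and $B=\{[x_i^b,y_i^b]\}_{i=1}^{n_b}$ be persistence barcodes in $\mathcal{B}_F$ with positive total lengths $L_a,L_b>0$. If the relative error satisfies $r_p(A,B)<1/4$, then $$|E(A)-E(B)|\le 2r_p(A,B)\left[\log(n_{\max})-\log\big(2r_p(A,B)\big)\right].$$
   Context: A persistence barcode is a finite multiset of intervals $[x,y]$ with $x\le y$; $\mathcal{B}_F$ denotes the set of persistence barcodes all of whose intervals have finite endpoints ($x,y\in\mathbb{R}$). For $A=\{[x_i^a,y_i^a]\}_{i=1}^{n_a}$ write $\ell_i^a=y_i^a-x_i^a$ and $L_a=\sum_i\ell_i^a$; similarly for $B$. Put $n_{\max}=\max\{n_a,n_b\}$, $L_{\max}=\max\{L_a,L_b\}$. The $p$-th Wasserstein distance: if $n_a\neq n_b$, add intervals of zero length $[t,t]$ to the smaller barcode until both have $n_{\max}$ intervals; then for $1\le p<\infty$, $d_p(A,B)=\big(\min_\gamma\sum_{i=1}^{n_{\max}}\max\{|x_i^a-x^b_{\gamma(i)}|^p,|y_i^a-y^b_{\gamma(i)}|^p\}\big)^{1/p}$ and $d_\infty(A,B)=\min_\gamma\max_i\max\{|x_i^a-x^b_{\gamma(i)}|,|y_i^a-y^b_{\gamma(i)}|\}$, the minimum being over bijections $\gamma$ between the (padded) multisets (and the choices of added zero-length intervals). The persistent entropy of $A\in\mathcal{B}_F$ with $L_a>0$ is $E(A)=-\sum_{i=1}^{n_a}\frac{\ell_i^a}{L_a}\log\frac{\ell_i^a}{L_a}$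 (with $0\log 0=0$). The relative error is $r_p(A,B)=\dfrac{2\,n_{\max}^{1-1/p}\,d_p(A,B)}{L_{\max}}$, where $n_{\max}^{1-1/\infty}=n_{\max}$. Convention: $0\log 0=0$. *)

theory Defs
  imports "HOL-Analysis.Analysis" "HOL-Library.Multiset" "HOL-Library.Extended_Real"
begin

type_synonym barcode = "(real \<times> real) multiset"

definition is_barcode :: "barcode \<Rightarrow> bool" where
  "is_barcode A \<longleftrightarrow> (\<forall>I \<in># A. fst I \<le> snd I)"

definition total_length :: "barcode \<Rightarrow> real" where
  "total_length A = (\<Sum>I\<in>#A. snd I - fst I)"

definition n_max :: "barcode \<Rightarrow> barcode \<Rightarrow> nat" where
  "n_max A B = max (size A) (size B)"

definition L_max :: "barcode \<Rightarrow> barcode \<Rightarrow> real" where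
  "L_max A B = max (total_length A) (total_length B)"

definition padded :: "nat \<Rightarrow> barcode \<Rightarrow> (real \<times> real) list set" where
  "padded n A = {xs. length xs = n \<and> (\<exists>ts. mset xs = A + mset (map (\<lambda>t. (t, t)) ts))}"

definition int_dist :: "real \<times> real \<Rightarrow> real \<times> real \<Rightarrow> real" where
  "int_dist I J = max \<bar>fst I - fst J\<bar> \<bar>snd I - snd J\<bar>"

definition wasserstein :: "real \<Rightarrow> barcode \<Rightarrow> barcode \<Rightarrow> real" where
  "wasserstein p A B =
     (let n = n_max A B in
      (Inf {(\<Sum>i<n. (int_dist (xs ! i) (ys ! \<gamma> i)) powr p) | xs ys \<gamma>.
              xs \<in> padded n A \<and> ys \<in> padded n B \<and> bij_betw \<gamma> {..<n} {..<n}}) powr (1 / p))"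

definition wasserstein_inf :: "barcode \<Rightarrow> barcode \<Rightarrow> real" where
  "wasserstein_inf A B =
     (let n = n_max A B in
      Inf {(MAX i\<in>{..<n}. int_dist (xs ! i) (ys ! \<gamma> i)) | xs ys \<gamma>.
              xs \<in> padded n A \<and> ys \<in> padded n B \<and> bij_betw \<gamma> {..<n} {..<n}})"

definition wdist :: "ereal \<Rightarrow> barcode \<Rightarrow> barcode \<Rightarrow> real" where
  "wdist p A B = (if p = \<infinity> then wasserstein_inf A B else wasserstein (real_of_ereal p) A B)"

definition pers_entropy :: "barcode \<Rightarrow> real" where
  "pers_entropy A = - (\<Sum>I\<in>#A. (let q = (snd I - fst I) / total_length A in
                                   if q = 0 then 0 else q * ln q))"

text \<open>Relative error r_p(A,B); for p = \<infinity> the factor n_max^(1-1/p) is n_max.\<close>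
definition rel_err :: "ereal \<Rightarrow> barcode \<Rightarrow> barcode \<Rightarrow> real" where
  "rel_err p A B =
     2 * (if p = \<infinity> then real (n_max A B) else real (n_max A B) powr (1 - 1 / real_of_ereal p))
       * wdist p A B / L_max A B"

end

theory Submission
  imports Defs "HOL-Real_Asymp.Real_Asymp"
begin

text \<open>Dividing the bar lengths of a barcode by its total length gives a probability vector whose
Shannon entropy is the persistent entropy; padding with zero-length bars does not change it. An
optimal matching pads A and B to n = n_max bars each, and the normalised length vectors of the
matched bars are at distance at most 4 d_1 / L_max in l_1, where d_1 is the l_1 matching cost;
by the power-mean inequality d_1 \<le> n^(1-1/p) d_p, so this distance is at most 2 r_p. A
Fannes-type continuity bound for the Shannon entropy, |H(a) - H(b)| \<le> s (ln n - ln s) whenever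
|a - b|_1 \<le> s < 1/2, then gives the claim. As the infimum defining d_p need not be attained, the
bound is first proved for every s > 2 r_p and then passed to the limit.\<close>

definition eta :: "real \<Rightarrow> real" where
  "eta x = - (x * ln x)"

lemma eta_nonneg: "0 \<le> x \<Longrightarrow> x \<le> 1 \<Longrightarrow> 0 \<le> eta x"
  unfolding eta_def by (cases "x = 0") (auto simp: mult_nonneg_nonpos)

lemma self_le_eta:
  fixes t :: real
  assumes "0 \<le> t" "t \<le> 1/4"
  shows "t \<le> eta t"
proof (cases "t = 0")
  case False
  have "exp 1 \<le> (4::real)" using exp_le by linarith
  then have "1 \<le> ln (4::real)" by (metis exp_gt_zero ln_exp ln_le_cancel_iff zero_less_numeral)
  moreover have "ln t \<le> ln (1/4)" using assms False by simp
  ultimately have "ln t \<le> -1" by (simp add: ln_div)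
  then have "t * ln t \<le> t * (-1)" using assms by (intro mult_left_mono) auto
  then show ?thesis unfolding eta_def by linarith
qed (simp add: eta_def)

lemma eta_le_tangent:
  assumes "0 \<le> t" "0 < u"
  shows "eta t \<le> u - t - t * ln u"
proof (cases "t = 0")
  case False
  then have t0: "0 < t" using assms by auto
  have "ln (u / t) \<le> u / t - 1" using t0 assms by (intro ln_le_minus_one) auto
  then have "t * ln (u/t) \<le> t * (u/t - 1)" using t0 by (intro mult_left_mono) auto
  then have "t * (ln u - ln t) \<le> u - t" using t0 assms by (simp add: ln_div right_diff_distrib)
  then show ?thesis by (simp add: eta_def algebra_simps)
qed (use assms in \<open>simp add: eta_def\<close>)

lemma abs_eta_diff_le_of_le:
  assumes "0 \<le> a" "a \<le> b" "b \<le> 1" "b - a \<le> 1/4"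
  shows "\<bar>eta a - eta b\<bar> \<le> eta (b - a)"
proof -
  define t where "t = b - a"
  have t: "0 \<le> t" "t \<le> 1/4" "b = a + t" using assms by (auto simp: t_def)
  have "eta b - eta a \<le> eta t"
  proof -
    have "a * ln a \<le> a * ln b"
      using assms by (cases "a = 0") (auto intro!: mult_left_mono)
    moreover have "t * ln t \<le> t * ln b"
      using t assms by (cases "t = 0") (auto intro!: mult_left_mono)
    ultimately show ?thesis unfolding eta_def using t by (simp add: algebra_simps)
  qed
  moreover have "eta a - eta b \<le> eta t"
  proof (cases "a = 0")
    case True
    have "b * ln b \<le> 0" using assms by (cases "b = 0") (auto simp: mult_nonneg_nonpos)
    then show ?thesis using True eta_nonneg[of t] t unfolding eta_def by auto
  next
    case False
    then have a0: "0 < a" using assms by auto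
    have "ln (b / a) \<le> b / a - 1" using a0 assms by (intro ln_le_minus_one) auto
    then have "a * ln (b/a) \<le> a * (b/a - 1)" using a0 by (intro mult_left_mono) auto
    also have "\<dots> = t" using a0 t by (simp add: field_simps)
    finally have "a * (ln b - ln a) \<le> t" using a0 assms by (simp add: ln_div)
    moreover have "t * ln b \<le> 0" using t assms a0 by (intro mult_nonneg_nonpos) auto
    ultimately have "eta a - eta b \<le> t" unfolding eta_def using t by (simp add: algebra_simps)
    then show ?thesis using self_le_eta[OF t(1,2)] by linarith
  qed
  ultimately show ?thesis unfolding t_def by linarith
qed

lemma abs_eta_diff_le:
  assumes "0 \<le> a" "a \<le> 1" "0 \<le> b" "b \<le> 1" "\<bar>a - b\<bar> \<le> 1/4"
  shows "\<bar>eta a - eta b\<bar> \<le> eta \<bar>a - b\<bar>"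
  using abs_eta_diff_le_of_le[of a b] abs_eta_diff_le_of_le[of b a] assms
  by (cases "a \<le> b") (auto simp: abs_minus_commute)

lemma sum_eta_le_of_sum_le:
  fixes t :: "nat \<Rightarrow> real"
  assumes t0: "\<And>i. i < n \<Longrightarrow> 0 \<le> t i" and ts: "(\<Sum>i<n. t i) \<le> s"
    and s: "0 < s" "s < 1/2" and n: "2 \<le> n"
  shows "(\<Sum>i<n. eta (t i)) \<le> s * (ln (real n) - ln s)"
proof -
  define \<delta> where "\<delta> = (\<Sum>i<n. t i)"
  define u where "u = s / real n"
  have u: "0 < u" using s n by (simp add: u_def)
  \<comment> \<open>tangent line of the concave function eta at u = s/n\<close>
  have "(\<Sum>i<n. eta (t i)) \<le> (\<Sum>i<n. u - t i - t i * ln u)"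
    by (rule sum_mono) (use eta_le_tangent[OF t0 u] in auto)
  also have "\<dots> = s - \<delta> - \<delta> * (ln s - ln (real n))"
    using s n by (simp add: sum_subtractf \<delta>_def u_def ln_div flip: sum_distrib_right)
  also have "\<dots> \<le> s * (ln (real n) - ln s)"
  proof -
    have "ln (2::real) \<le> ln (real n)" using n by simp
    moreover have "ln s \<le> ln (1/2)" using s by simp
    ultimately have "1 \<le> ln (real n) - ln s" using ln2_ge_two_thirds by (simp add: ln_div)
    moreover have "\<delta> \<le> s" using ts by (simp add: \<delta>_def)
    ultimately have "0 \<le> (s - \<delta>) * (ln (real n) - ln s - 1)" by simp
    then show ?thesis by (simp add: algebra_simps)
  qed
  finally show ?thesis .
qed

lemma two_abs_diff_le_sum_abs_diff:
  fixes a b :: "nat \<Rightarrow> real"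
  assumes "(\<Sum>i<n. a i) = 1" "(\<Sum>i<n. b i) = 1" "k < n"
  shows "2 * \<bar>a k - b k\<bar> \<le> (\<Sum>i<n. \<bar>a i - b i\<bar>)"
proof -
  let ?R = "{..<n} - {k}"
  have k: "k \<in> {..<n}" using assms(3) by simp
  have "(\<Sum>i<n. a i - b i) = 0" using assms(1,2) by (simp add: sum_subtractf)
  then have "(\<Sum>i\<in>?R. a i - b i) = b k - a k"
    using sum.remove[OF finite_lessThan k, of "\<lambda>i. a i - b i"] by simp
  then have "\<bar>a k - b k\<bar> \<le> (\<Sum>i\<in>?R. \<bar>a i - b i\<bar>)"
    using sum_abs[of "\<lambda>i. a i - b i" ?R] by (simp add: abs_minus_commute)
  then show ?thesis using sum.remove[OF finite_lessThan k, of "\<lambda>i. \<bar>a i - b i\<bar>"] by simp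
qed

lemma fannes_inequality:
  fixes a b :: "nat \<Rightarrow> real"
  assumes a0: "\<And>i. i < n \<Longrightarrow> 0 \<le> a i" and b0: "\<And>i. i < n \<Longrightarrow> 0 \<le> b i"
    and sa: "(\<Sum>i<n. a i) = 1" and sb: "(\<Sum>i<n. b i) = 1"
    and d: "(\<Sum>i<n. \<bar>a i - b i\<bar>) \<le> s" and s: "s < 1/2"
  shows "\<bar>(\<Sum>i<n. eta (a i)) - (\<Sum>i<n. eta (b i))\<bar> \<le> s * (ln (real n) - ln s)"
proof -
  define t where "t i = \<bar>a i - b i\<bar>" for i
  have two_t: "2 * t i \<le> s" if "i < n" for i
    using two_abs_diff_le_sum_abs_diff[OF sa sb that] d unfolding t_def by (rule order_trans)
  have s0: "0 \<le> s" using d by (meson abs_ge_zero order_trans sum_nonneg)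
  have n1: "1 \<le> n" using sa by (cases n) auto
  have rhs_nonneg: "0 \<le> s * (ln (real n) - ln s)"
    using s0 s n1 by (cases "s = 0") (auto intro!: mult_nonneg_nonneg)
  consider (eq) "\<forall>i<n. a i = b i" | (ne) "0 < s" "2 \<le> n"
  proof (cases "\<forall>i<n. a i = b i")
    case False
    then obtain k where k: "k < n" "a k \<noteq> b k" by blast
    have "n \<noteq> 1" using k sa sb by auto
    moreover have "0 < t k" using k(2) by (simp add: t_def)
    then have "0 < s" using two_t[OF k(1)] by linarith
    ultimately show thesis using that n1 by simp
  qed simp
  then show ?thesis
  proof cases
    case eq
    then show ?thesis using rhs_nonneg by simp
  next
    case ne
    have a1: "a i \<le> 1" and b1: "b i \<le> 1" if "i < n" for i
      using member_le_sum[of i "{..<n}" a] member_le_sum[of i "{..<n}" b] a0 b0 sa sb that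
      by auto
    have quarter: "t i \<le> 1/4" if "i < n" for i using two_t[OF that] s by linarith
    have "\<bar>(\<Sum>i<n. eta (a i)) - (\<Sum>i<n. eta (b i))\<bar> \<le> (\<Sum>i<n. \<bar>eta (a i) - eta (b i)\<bar>)"
      by (metis sum_abs sum_subtractf)
    also have "\<dots> \<le> (\<Sum>i<n. eta (t i))"
      by (rule sum_mono) (use abs_eta_diff_le a0 b0 a1 b1 quarter in \<open>auto simp: t_def\<close>)
    also have "\<dots> \<le> s * (ln (real n) - ln s)"
      by (rule sum_eta_le_of_sum_le) (use d ne s in \<open>auto simp: t_def\<close>)
    finally show ?thesis .
  qed
qed

lemma sum_le_powr_sum_powr:
  fixes d :: "nat \<Rightarrow> real" and p :: real
  assumes d0: "\<And>i. i < n \<Longrightarrow> 0 \<le> d i" and p: "1 \<le> p"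
  shows "(\<Sum>i<n. d i) \<le> real n powr (1 - 1/p) * (\<Sum>i<n. d i powr p) powr (1/p)"
proof -
  \<comment> \<open>restrict to the support S, because powr_convex only holds on the open half-line\<close>
  define S where "S = {i\<in>{..<n}. 0 < d i}"
  have S: "finite S" "S \<subseteq> {..<n}" by (auto simp: S_def)
  have zero: "d i = 0" if "i \<in> {..<n} - S" for i using d0[of i] that by (auto simp: S_def)
  have e1: "(\<Sum>i<n. d i) = (\<Sum>i\<in>S. d i)"
    by (rule sum.mono_neutral_right) (use zero S in auto)
  have e2: "(\<Sum>i<n. d i powr p) = (\<Sum>i\<in>S. d i powr p)"
    by (rule sum.mono_neutral_right) (use zero S in auto)
  define P where "P = (\<Sum>i\<in>S. d i powr p)"
  define k where "k = card S"
  show ?thesis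
  proof (cases "S = {}")
    case False
    have k: "0 < k" "k \<le> n" using False S card_mono[OF _ S(2)] by (auto simp: k_def card_gt_0_iff)
    have "(\<Sum>i\<in>S. (1 / real k) *\<^sub>R d i) powr p \<le> (\<Sum>i\<in>S. (1 / real k) * d i powr p)"
    proof (rule convex_on_sum[OF S(1) False powr_convex[OF p]])
      show "(\<Sum>i\<in>S. 1 / real k) = 1" using k by (simp add: k_def)
    qed (auto simp: S_def)
    then have jensen: "((\<Sum>i\<in>S. d i) / k) powr p \<le> P / k"
      by (simp add: P_def sum_divide_distrib[symmetric] sum_distrib_left[symmetric])
    define m where "m = (\<Sum>i\<in>S. d i) / k"
    have m0: "0 \<le> m" unfolding m_def by (intro divide_nonneg_nonneg sum_nonneg) (auto simp: S_def)
    have "m = (m powr p) powr (1/p)" using m0 p by (simp add: powr_powr)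
    also have "\<dots> \<le> (P / k) powr (1/p)" using jensen m0 p by (intro powr_mono2) (auto simp: m_def)
    finally have m_le: "m \<le> (P / k) powr (1/p)" .
    have "(\<Sum>i\<in>S. d i) = k * m" using k by (simp add: m_def)
    also have "\<dots> \<le> k * (P / k) powr (1/p)" using m_le k by simp
    also have "\<dots> = real k powr (1 - 1/p) * P powr (1/p)"
      using k by (simp add: powr_divide powr_diff P_def sum_nonneg)
    also have "\<dots> \<le> real n powr (1 - 1/p) * P powr (1/p)"
      using k p by (intro mult_right_mono powr_mono2) auto
    finally show ?thesis using e1 e2 by (simp add: P_def)
  qed (use e1 in simp)
qed

definition interval_length :: "real \<times> real \<Rightarrow> real" where
  "interval_length I = snd I - fst I"

lemma sum_nth_eq_sum_mset: "(\<Sum>i<length xs. f (xs ! i)) = (\<Sum>x\<in>#mset xs. f x)"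
proof -
  have "(\<Sum>i<length xs. f (xs ! i)) = sum_list (map f xs)"
    by (simp add: sum_list_sum_nth atLeast0LessThan)
  then show ?thesis by (simp flip: sum_mset_sum_list)
qed

lemma padded_nonempty: "size A \<le> n \<Longrightarrow> padded n A \<noteq> {}"
proof -
  assume "size A \<le> n"
  obtain xs where xs: "mset xs = A" using ex_mset by blast
  define ts where "ts = replicate (n - size A) (0::real)"
  have "length (xs @ map (\<lambda>t. (t, t)) ts) = n"
    using \<open>size A \<le> n\<close> xs by (simp add: ts_def flip: size_mset)
  then have "xs @ map (\<lambda>t. (t, t)) ts \<in> padded n A"
    unfolding padded_def using xs by (auto simp del: mset_map)
  then show ?thesis by blast
qed

lemma sum_padded:
  fixes f :: "real \<times> real \<Rightarrow> 'b::comm_monoid_add"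
  assumes "xs \<in> padded n A" and "\<And>t. f (t, t) = 0"
  shows "(\<Sum>i<n. f (xs ! i)) = (\<Sum>I\<in>#A. f I)"
proof -
  obtain ts where "length xs = n" and m: "mset xs = A + mset (map (\<lambda>t. (t, t)) ts)"
    using assms(1) unfolding padded_def by auto
  then have "(\<Sum>i<n. f (xs ! i)) = (\<Sum>I\<in>#A. f I) + (\<Sum>I\<in>#mset (map (\<lambda>t. (t, t)) ts). f I)"
    using sum_nth_eq_sum_mset[of f xs] by (simp add: m)
  also have "(\<Sum>I\<in>#mset (map (\<lambda>t. (t, t)) ts). f I) = 0"
    by (induction ts) (auto simp: assms(2))
  finally show ?thesis by simp
qed

lemma interval_length_padded_nonneg:
  assumes "xs \<in> padded n A" "is_barcode A" "i < n"
  shows "0 \<le> interval_length (xs ! i)"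
proof -
  obtain ts where l: "length xs = n" and m: "mset xs = A + mset (map (\<lambda>t. (t, t)) ts)"
    using assms(1) unfolding padded_def by auto
  have "xs ! i \<in># mset xs" using l assms(3) by simp
  then have "xs ! i \<in># A + mset (map (\<lambda>t. (t, t)) ts)" by (simp only: m)
  then show ?thesis using assms(2) unfolding is_barcode_def interval_length_def by auto
qed

lemma sum_interval_length_padded:
  "xs \<in> padded n A \<Longrightarrow> (\<Sum>i<n. interval_length (xs ! i)) = total_length A"
  using sum_padded[of xs n A interval_length] by (simp add: interval_length_def total_length_def)

lemma pers_entropy_padded:
  assumes "xs \<in> padded n A"
  shows "pers_entropy A = (\<Sum>i<n. eta (interval_length (xs ! i) / total_length A))"
proof -
  have uminus: "(\<Sum>I\<in>#M. - f I) = - (\<Sum>I\<in>#M. f I :: real)" for f and M :: barcode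
    by (induction M) auto
  have summand: "(let q = (snd I - fst I) / total_length A in if q = 0 then 0 else q * ln q)
      = - eta (interval_length I / total_length A)" for I
    by (simp add: Let_def eta_def interval_length_def)
  have "pers_entropy A = (\<Sum>I\<in>#A. eta (interval_length I / total_length A))"
    unfolding pers_entropy_def summand uminus by simp
  also have "\<dots> = (\<Sum>i<n. eta (interval_length (xs ! i) / total_length A))"
    by (rule sum_padded[OF assms, symmetric]) (simp add: interval_length_def eta_def)
  finally show ?thesis .
qed

lemma abs_interval_length_diff_le: "\<bar>interval_length I - interval_length J\<bar> \<le> 2 * int_dist I J"
proof -
  have "interval_length I - interval_length J = (snd I - snd J) - (fst I - fst J)"
    by (simp add: interval_length_def)
  then have "\<bar>interval_length I - interval_length J\<bar> \<le> \<bar>snd I - snd J\<bar> + \<bar>fst I - fst J\<bar>"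
    by (metis abs_triangle_ineq4)
  moreover have "\<bar>snd I - snd J\<bar> \<le> int_dist I J" "\<bar>fst I - fst J\<bar> \<le> int_dist I J"
    by (auto simp: int_dist_def)
  ultimately show ?thesis by linarith
qed

lemma sum_abs_normalized_diff_le:
  fixes \<alpha> \<beta> :: "nat \<Rightarrow> real"
  assumes \<beta>0: "\<And>i. i < n \<Longrightarrow> 0 \<le> \<beta> i"
    and sa: "(\<Sum>i<n. \<alpha> i) = LA" and sb: "(\<Sum>i<n. \<beta> i) = LB" and LA: "0 < LA" and LB: "0 < LB"
  shows "(\<Sum>i<n. \<bar>\<alpha> i / LA - \<beta> i / LB\<bar>) \<le> 2 * (\<Sum>i<n. \<bar>\<alpha> i - \<beta> i\<bar>) / LA"
proof -
  have "(\<Sum>i<n. \<bar>\<alpha> i / LA - \<beta> i / LB\<bar>) \<le> (\<Sum>i<n. \<bar>\<alpha> i - \<beta> i\<bar> / LA + \<beta> i * \<bar>1/LA - 1/LB\<bar>)"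
  proof (rule sum_mono)
    fix i assume "i \<in> {..<n}"
    then have "0 \<le> \<beta> i" using \<beta>0 by auto
    have "\<alpha> i / LA - \<beta> i / LB = (\<alpha> i - \<beta> i) / LA + \<beta> i * (1/LA - 1/LB)"
      using LA LB by (simp add: field_simps)
    also have "\<bar>\<dots>\<bar> \<le> \<bar>\<alpha> i - \<beta> i\<bar> / LA + \<beta> i * \<bar>1/LA - 1/LB\<bar>"
      using abs_triangle_ineq \<open>0 \<le> \<beta> i\<close> LA by (metis abs_divide abs_mult abs_of_nonneg abs_of_pos)
    finally show "\<bar>\<alpha> i / LA - \<beta> i / LB\<bar> \<le> \<bar>\<alpha> i - \<beta> i\<bar> / LA + \<beta> i * \<bar>1/LA - 1/LB\<bar>" .
  qed
  also have "\<dots> = (\<Sum>i<n. \<bar>\<alpha> i - \<beta> i\<bar>) / LA + \<bar>LA - LB\<bar> / LA"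
  proof -
    have "LB * \<bar>1/LA - 1/LB\<bar> = \<bar>LB * (1/LA - 1/LB)\<bar>" using LB by (simp add: abs_mult)
    also have "LB * (1/LA - 1/LB) = (LB - LA) / LA" using LA LB by (simp add: field_simps)
    finally have "LB * \<bar>1/LA - 1/LB\<bar> = \<bar>LA - LB\<bar> / LA" using LA by (simp add: abs_minus_commute)
    then show ?thesis using sb by (simp add: sum.distrib sum_divide_distrib flip: sum_distrib_right)
  qed
  also have "\<bar>LA - LB\<bar> \<le> (\<Sum>i<n. \<bar>\<alpha> i - \<beta> i\<bar>)"
    using sa sb sum_abs[of "\<lambda>i. \<alpha> i - \<beta> i" "{..<n}"] by (simp add: sum_subtractf)
  finally show ?thesis using LA by (simp add: divide_right_mono field_simps)
qed

lemma sum_abs_normalized_diff_le_max: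
  fixes \<alpha> \<beta> :: "nat \<Rightarrow> real"
  assumes "\<And>i. i < n \<Longrightarrow> 0 \<le> \<alpha> i" "\<And>i. i < n \<Longrightarrow> 0 \<le> \<beta> i"
    and "(\<Sum>i<n. \<alpha> i) = LA" "(\<Sum>i<n. \<beta> i) = LB" "0 < LA" "0 < LB"
  shows "(\<Sum>i<n. \<bar>\<alpha> i / LA - \<beta> i / LB\<bar>) \<le> 2 * (\<Sum>i<n. \<bar>\<alpha> i - \<beta> i\<bar>) / max LA LB"
proof (cases "LB \<le> LA")
  case True
  then show ?thesis using sum_abs_normalized_diff_le[of n \<beta> \<alpha> LA LB] assms by (simp add: max_def)
next
  case False
  then show ?thesis using sum_abs_normalized_diff_le[of n \<alpha> \<beta> LB LA] assms
    by (simp add: max_def abs_minus_commute)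
qed

lemma entropy_diff_le_of_matching:
  assumes bA: "is_barcode A" and bB: "is_barcode B"
    and LA: "total_length A > 0" and LB: "total_length B > 0"
    and xs: "xs \<in> padded n A" and ys: "ys \<in> padded n B" and \<gamma>: "bij_betw \<gamma> {..<n} {..<n}"
    and cost: "4 * (\<Sum>i<n. int_dist (xs ! i) (ys ! \<gamma> i)) / L_max A B \<le> s" and s: "s < 1/2"
  shows "\<bar>pers_entropy A - pers_entropy B\<bar> \<le> s * (ln (real n) - ln s)"
proof -
  define \<alpha> where "\<alpha> i = interval_length (xs ! i)" for i
  define \<beta> where "\<beta> i = interval_length (ys ! \<gamma> i)" for i
  define a where "a i = \<alpha> i / total_length A" for i
  define b where "b i = \<beta> i / total_length B" for i
  have \<gamma>_lt: "\<gamma> i < n" if "i < n" for i using \<gamma> that by (auto dest: bij_betw_apply)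
  have \<alpha>0: "0 \<le> \<alpha> i" and \<beta>0: "0 \<le> \<beta> i" if "i < n" for i
    using interval_length_padded_nonneg[OF xs bA that] interval_length_padded_nonneg[OF ys bB \<gamma>_lt[OF that]]
    by (simp_all add: \<alpha>_def \<beta>_def)
  have reindex: "(\<Sum>i<n. f (ys ! \<gamma> i)) = (\<Sum>j<n. f (ys ! j))" for f :: "real \<times> real \<Rightarrow> real"
    using sum.reindex_bij_betw[OF \<gamma>, of "\<lambda>j. f (ys ! j)"] by simp
  have sum\<alpha>: "(\<Sum>i<n. \<alpha> i) = total_length A"
    using sum_interval_length_padded[OF xs] by (simp add: \<alpha>_def)
  have sum\<beta>: "(\<Sum>i<n. \<beta> i) = total_length B"
    using sum_interval_length_padded[OF ys] reindex by (simp add: \<beta>_def)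
  have "pers_entropy A = (\<Sum>i<n. eta (a i))"
    using pers_entropy_padded[OF xs] by (simp add: a_def \<alpha>_def)
  moreover have "pers_entropy B = (\<Sum>i<n. eta (b i))"
    using pers_entropy_padded[OF ys] reindex[of "\<lambda>J. eta (interval_length J / total_length B)"]
    by (simp add: b_def \<beta>_def)
  moreover have "(\<Sum>i<n. a i) = 1" "(\<Sum>i<n. b i) = 1"
    using sum\<alpha> sum\<beta> LA LB by (simp_all add: a_def b_def flip: sum_divide_distrib)
  moreover have "0 \<le> a i" "0 \<le> b i" if "i < n" for i
    using \<alpha>0[OF that] \<beta>0[OF that] LA LB by (simp_all add: a_def b_def)
  moreover have "(\<Sum>i<n. \<bar>a i - b i\<bar>) \<le> s"
  proof -
    have "(\<Sum>i<n. \<bar>\<alpha> i - \<beta> i\<bar>) \<le> (\<Sum>i<n. 2 * int_dist (xs ! i) (ys ! \<gamma> i))"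
      by (rule sum_mono) (simp add: \<alpha>_def \<beta>_def abs_interval_length_diff_le)
    then have "2 * (\<Sum>i<n. \<bar>\<alpha> i - \<beta> i\<bar>) / L_max A B
        \<le> 4 * (\<Sum>i<n. int_dist (xs ! i) (ys ! \<gamma> i)) / L_max A B"
      using LA by (intro divide_right_mono) (auto simp: L_max_def simp flip: sum_distrib_left)
    then have "2 * (\<Sum>i<n. \<bar>\<alpha> i - \<beta> i\<bar>) / L_max A B \<le> s" using cost by linarith
    then show ?thesis
      using sum_abs_normalized_diff_le_max[OF \<alpha>0 \<beta>0 sum\<alpha> sum\<beta> LA LB]
      by (simp add: a_def b_def L_max_def)
  qed
  ultimately show ?thesis using fannes_inequality[of n a b s] s by simp
qed

lemma wasserstein_inf_less_imp_matching:
  assumes "wasserstein_inf A B < \<tau>"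
  shows "\<exists>xs ys \<gamma>. xs \<in> padded (n_max A B) A \<and> ys \<in> padded (n_max A B) B
    \<and> bij_betw \<gamma> {..<n_max A B} {..<n_max A B}
    \<and> (\<Sum>i<n_max A B. int_dist (xs ! i) (ys ! \<gamma> i)) \<le> real (n_max A B) * \<tau>"
proof -
  define n where "n = n_max A B"
  define T where "T = {(MAX i\<in>{..<n}. int_dist (xs ! i) (ys ! \<gamma> i)) | xs ys \<gamma>.
    xs \<in> padded n A \<and> ys \<in> padded n B \<and> bij_betw \<gamma> {..<n} {..<n}}"
  obtain xs0 ys0 where "xs0 \<in> padded n A" "ys0 \<in> padded n B"
    using padded_nonempty[of A n] padded_nonempty[of B n] by (auto simp: n_def n_max_def)
  then have "(MAX i\<in>{..<n}. int_dist (xs0 ! i) (ys0 ! id i)) \<in> T"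
    unfolding T_def using bij_betw_id by blast
  moreover have "Inf T < \<tau>" using assms by (simp add: wasserstein_inf_def T_def n_def Let_def)
  ultimately obtain M where "M \<in> T" "M < \<tau>" using cInf_lessD by blast
  then obtain xs ys \<gamma> where
    match: "xs \<in> padded n A" "ys \<in> padded n B" "bij_betw \<gamma> {..<n} {..<n}"
    and max_lt: "(MAX i\<in>{..<n}. int_dist (xs ! i) (ys ! \<gamma> i)) < \<tau>"
    unfolding T_def by blast
  have "(\<Sum>i<n. int_dist (xs ! i) (ys ! \<gamma> i))
      \<le> real (card {..<n}) * (MAX i\<in>{..<n}. int_dist (xs ! i) (ys ! \<gamma> i))"
    by (rule sum_bounded_above) auto
  also have "\<dots> \<le> real n * \<tau>" using max_lt by (simp add: mult_left_mono)
  finally show ?thesis using match unfolding n_def by blast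
qed

lemma wasserstein_less_imp_matching:
  assumes p: "1 \<le> p" and "wasserstein p A B < \<tau>"
  shows "\<exists>xs ys \<gamma>. xs \<in> padded (n_max A B) A \<and> ys \<in> padded (n_max A B) B
    \<and> bij_betw \<gamma> {..<n_max A B} {..<n_max A B}
    \<and> (\<Sum>i<n_max A B. int_dist (xs ! i) (ys ! \<gamma> i)) \<le> real (n_max A B) powr (1 - 1/p) * \<tau>"
proof -
  define n where "n = n_max A B"
  define T where "T = {(\<Sum>i<n. int_dist (xs ! i) (ys ! \<gamma> i) powr p) | xs ys \<gamma>.
    xs \<in> padded n A \<and> ys \<in> padded n B \<and> bij_betw \<gamma> {..<n} {..<n}}"
  obtain xs0 ys0 where "xs0 \<in> padded n A" "ys0 \<in> padded n B"
    using padded_nonempty[of A n] padded_nonempty[of B n] by (auto simp: n_def n_max_def)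
  then have "(\<Sum>i<n. int_dist (xs0 ! i) (ys0 ! id i) powr p) \<in> T"
    unfolding T_def using bij_betw_id by blast
  then have T: "T \<noteq> {}" by blast
  have W: "Inf T powr (1/p) < \<tau>" using assms(2) by (simp add: wasserstein_def T_def n_def Let_def)
  have "0 \<le> Inf T" using T by (intro cInf_greatest) (auto simp: T_def intro!: sum_nonneg)
  then have "Inf T = (Inf T powr (1/p)) powr p" using p by (simp add: powr_powr)
  also have "\<dots> < \<tau> powr p" using W p by (intro powr_less_mono2) auto
  finally obtain c where "c \<in> T" "c < \<tau> powr p" using cInf_lessD[OF T] by blast
  then obtain xs ys \<gamma> where
    match: "xs \<in> padded n A" "ys \<in> padded n B" "bij_betw \<gamma> {..<n} {..<n}"
    and cost_lt: "(\<Sum>i<n. int_dist (xs ! i) (ys ! \<gamma> i) powr p) < \<tau> powr p"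
    unfolding T_def by blast
  have \<tau>: "0 < \<tau>" using W by (meson le_less_trans powr_ge_zero)
  have "(\<Sum>i<n. int_dist (xs ! i) (ys ! \<gamma> i) powr p) powr (1/p) \<le> (\<tau> powr p) powr (1/p)"
    using cost_lt p by (intro powr_mono2) (auto intro!: sum_nonneg)
  also have "\<dots> = \<tau>" using \<tau> p by (simp add: powr_powr)
  finally have "real n powr (1 - 1/p) * (\<Sum>i<n. int_dist (xs ! i) (ys ! \<gamma> i) powr p) powr (1/p)
      \<le> real n powr (1 - 1/p) * \<tau>" by (simp add: mult_left_mono)
  moreover have "(\<Sum>i<n. int_dist (xs ! i) (ys ! \<gamma> i))
      \<le> real n powr (1 - 1/p) * (\<Sum>i<n. int_dist (xs ! i) (ys ! \<gamma> i) powr p) powr (1/p)"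
    by (rule sum_le_powr_sum_powr[OF _ p]) (simp add: int_dist_def)
  ultimately show ?thesis using match unfolding n_def by (blast intro: order_trans)
qed

lemma rel_err_less_imp_matching:
  assumes p: "1 \<le> p" and LA: "total_length A > 0" and s: "2 * rel_err p A B < s"
  shows "\<exists>xs ys \<gamma>. xs \<in> padded (n_max A B) A \<and> ys \<in> padded (n_max A B) B
    \<and> bij_betw \<gamma> {..<n_max A B} {..<n_max A B}
    \<and> 4 * (\<Sum>i<n_max A B. int_dist (xs ! i) (ys ! \<gamma> i)) / L_max A B \<le> s"
proof -
  define n where "n = n_max A B"
  define L where "L = L_max A B"
  define N where "N = (if p = \<infinity> then real n else real n powr (1 - 1 / real_of_ereal p))"
  have "A \<noteq> {#}" using LA by (auto simp: total_length_def)
  then have "0 < n" by (simp add: n_def n_max_def nonempty_has_size)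
  then have N: "0 < N" by (simp add: N_def)
  have L: "0 < L" using LA by (simp add: L_def L_max_def)
  define \<tau> where "\<tau> = s * L / (4 * N)"
  have "rel_err p A B = 2 * N * wdist p A B / L" by (simp add: rel_err_def N_def n_def L_def)
  then have "4 * N * wdist p A B = L * (2 * rel_err p A B)" using L by simp
  then have "4 * N * wdist p A B < L * s" using mult_strict_left_mono[OF s L] by linarith
  then have "wdist p A B < \<tau>" using N L by (simp add: \<tau>_def field_simps)
  then obtain xs ys \<gamma> where
    match: "xs \<in> padded n A" "ys \<in> padded n B" "bij_betw \<gamma> {..<n} {..<n}"
    and cost: "(\<Sum>i<n. int_dist (xs ! i) (ys ! \<gamma> i)) \<le> N * \<tau>"
  proof (cases "p = \<infinity>")
    case True
    then show ?thesis using that \<open>wdist p A B < \<tau>\<close> wasserstein_inf_less_imp_matching[of A B \<tau>]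
      by (auto simp: wdist_def N_def n_def)
  next
    case False
    then have "1 \<le> real_of_ereal p" using p by (cases p) auto
    moreover have "wasserstein (real_of_ereal p) A B < \<tau>"
      using False \<open>wdist p A B < \<tau>\<close> by (simp add: wdist_def)
    ultimately show ?thesis using that False wasserstein_less_imp_matching[of "real_of_ereal p" A B \<tau>]
      by (auto simp: N_def n_def)
  qed
  have "4 * (\<Sum>i<n. int_dist (xs ! i) (ys ! \<gamma> i)) / L \<le> 4 * (N * \<tau>) / L"
    using cost L by (intro divide_right_mono) auto
  also have "\<dots> = s" using N L by (simp add: \<tau>_def)
  finally show ?thesis using match unfolding n_def L_def by blast
qed

lemma entropy_bound_tendsto_at_right:
  fixes c m :: real
  assumes "0 \<le> c"
  shows "((\<lambda>s. s * (ln m - ln s)) \<longlongrightarrow> c * (ln m - ln c)) (at_right c)"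
proof (cases "c = 0")
  case True
  then show ?thesis by simp real_asymp
next
  case False
  then have "((\<lambda>s. s * (ln m - ln s)) \<longlongrightarrow> c * (ln m - ln c)) (at c)"
    using assms by (intro tendsto_intros) auto
  then show ?thesis by (rule tendsto_mono[rotated]) (simp add: at_le)
qed

lemma le_at_right_limit:
  fixes X c b :: real
  assumes "(f \<longlongrightarrow> f c) (at_right c)" and "c < b" and "\<And>s. c < s \<Longrightarrow> s < b \<Longrightarrow> X \<le> f s"
  shows "X \<le> f c"
proof (rule tendsto_le[OF _ assms(1) tendsto_const])
  show "eventually (\<lambda>s. X \<le> f s) (at_right c)"
    using eventually_at_right_real[OF assms(2)] by eventually_elim (use assms(3) in auto)
qed simp

theorem theorem4:
  fixes p :: ereal and A B :: barcode
  assumes "1 \<le> p"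
    and "is_barcode A" and "is_barcode B"
    and "total_length A > 0" and "total_length B > 0"
    and "rel_err p A B < 1 / 4"
  shows "\<bar>pers_entropy A - pers_entropy B\<bar>
           \<le> 2 * rel_err p A B * (ln (real (n_max A B)) - ln (2 * rel_err p A B))"
proof -
  define c where "c = 2 * rel_err p A B"
  have bound: "\<bar>pers_entropy A - pers_entropy B\<bar> \<le> s * (ln (real (n_max A B)) - ln s)"
    if "c < s" "s < 1/2" for s
    using rel_err_less_imp_matching[OF assms(1,4)] entropy_diff_le_of_matching[OF assms(2-5)] that
    unfolding c_def by blast
  have "0 \<le> c"
  proof (rule dense_ge)
    fix s assume "c < s"
    then obtain xs ys \<gamma> where
      "4 * (\<Sum>i<n_max A B. int_dist (xs ! i) (ys ! \<gamma> i)) / L_max A B \<le> s"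
      using rel_err_less_imp_matching[OF assms(1,4)] unfolding c_def by blast
    moreover have "0 \<le> 4 * (\<Sum>i<n_max A B. int_dist (xs ! i) (ys ! \<gamma> i)) / L_max A B"
      using assms(4) by (auto simp: L_max_def int_dist_def intro!: sum_nonneg divide_nonneg_pos)
    ultimately show "0 \<le> s" by linarith
  qed
  moreover have "c < 1/2" using assms(6) by (simp add: c_def)
  ultimately show ?thesis
    using le_at_right_limit[OF entropy_bound_tendsto_at_right _ bound] unfolding c_def by blast
qed

end
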